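(* Let $n$ be a positive integer, let $\mathcal F$ be an $\mathcal N$-saturated family of subsets of $[n]$, and let $\mathcal G$ be a component of $\mathcal F$ with minimal elements $B_1,\dots,B_l$ and maximal elements $A_1,\dots,A_k$. Let $M\in\mathcal F$ satisfy $\bigcup_{j=1}^l B_j\subseteq M\subseteq\bigcap_{j=1}^k A_j$ and be minimal (with respect to inclusion) among sets of $\mathcal F$ with this property. Suppose $i\in[n]$, $i\notin M$ and $M\cup\{i\}\notin\mathcal F$. If $M\cup\{i\}$ is a maximal element of some induced copy of $\mathcal N$ in $\mathcal F\cup\{M\cup\{i\}\}$, then there exists an induced copy of $\mathcal N$ in $\mathcal F\cup\{M\cup\{i\}\}$ in which $M\cup\{i\}$ is the maximal element comparable to both minimal elements and $M$ is one of the minimal elements. Moreover, the number of $i\in[n]\setminus M$ such that $M\cup\{i\}\notin\mathcal F$ and $M\cup\{i\}$ is a maximal element of some induced copy of $\mathcal N$ in $\mathcal F\cup\{M\cup\{i\}\}$ is at most $|\mathcal F|-2$.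
   Context: The poset $\mathcal N$ has four elements $a,b,c,d$ with $a<c$, $b<c$, $b<d$ and no other comparabilities (so $a,b$ are its minimal elements, $c,d$ its maximal elements; $c$ is the unique maximal element comparable to both minimal elements). A family $\mathcal Q$ of sets (ordered by inclusion) contains an induced copy of $\mathcal N$ if there are distinct sets in $\mathcal Q$ whose inclusion relations are exactly those of $a,b,c,d$ above. A family $\mathcal F$ of subsets of $[n]=\{1,\dots,n\}$ is $\mathcal N$-saturated if $\mathcal F$ contains no induced copy of $\mathcal N$, but for every $S\subseteq[n]$ with $S\notin\mathcal F$, the family $\mathcal F\cup\{S\}$ contains an induced copy of $\mathcal N$. A component of $\mathcal F$ is the vertex set of a connected component of the Hasse diagram (as a graph) of the poset $(\mathcal F\setminus\{\emptyset,[n]\},\subseteq)$; its minimal and maximal elements are taken with respect to inclusion within the component. *)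

theory Defs
  imports Main
begin

text \<open>Induced copy of the poset N (a<c, b<c, b<d, nothing else) in a family Q,
  with roles a b c d given explicitly.\<close>
definition is_N_copy :: "'a set set \<Rightarrow> 'a set \<Rightarrow> 'a set \<Rightarrow> 'a set \<Rightarrow> 'a set \<Rightarrow> bool" where
  "is_N_copy Q a b c d \<longleftrightarrow>
     a \<in> Q \<and> b \<in> Q \<and> c \<in> Q \<and> d \<in> Q \<and>
     a \<noteq> b \<and> a \<noteq> c \<and> a \<noteq> d \<and> b \<noteq> c \<and> b \<noteq> d \<and> c \<noteq> d \<and>
     a \<subseteq> c \<and> b \<subseteq> c \<and> b \<subseteq> d \<and>
     \<not> a \<subseteq> b \<and> \<not> b \<subseteq> a \<and> \<not> a \<subseteq> d \<and> \<not> d \<subseteq> a \<and>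
     \<not> c \<subseteq> d \<and> \<not> d \<subseteq> c \<and> \<not> c \<subseteq> a \<and> \<not> c \<subseteq> b \<and> \<not> d \<subseteq> b"

definition contains_N :: "'a set set \<Rightarrow> bool" where
  "contains_N Q \<longleftrightarrow> (\<exists>a b c d. is_N_copy Q a b c d)"

definition max_of_N_copy :: "'a set set \<Rightarrow> 'a set \<Rightarrow> bool" where
  "max_of_N_copy Q S \<longleftrightarrow> (\<exists>a b c d. is_N_copy Q a b c d \<and> (S = c \<or> S = d))"

definition N_saturated :: "nat \<Rightarrow> nat set set \<Rightarrow> bool" where
  "N_saturated n F \<longleftrightarrow>
     F \<subseteq> Pow {1..n} \<and> \<not> contains_N F \<and>
     (\<forall>S. S \<subseteq> {1..n} \<longrightarrow> S \<notin> F \<longrightarrow> contains_N (insert S F))"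

definition covers :: "'a set set \<Rightarrow> 'a set \<Rightarrow> 'a set \<Rightarrow> bool" where
  "covers P X Y \<longleftrightarrow> X \<in> P \<and> Y \<in> P \<and> X \<subset> Y \<and> \<not> (\<exists>Z\<in>P. X \<subset> Z \<and> Z \<subset> Y)"

definition hasse_conn :: "'a set set \<Rightarrow> 'a set \<Rightarrow> 'a set \<Rightarrow> bool" where
  "hasse_conn P = (\<lambda>X Y. covers P X Y \<or> covers P Y X)\<^sup>*\<^sup>*"

text \<open>G is a component of F: vertex set of a connected component of the Hasse diagram
  of F without the empty set and the ground set {1..n}.\<close>
definition is_component :: "nat \<Rightarrow> nat set set \<Rightarrow> nat set set \<Rightarrow> bool" where
  "is_component n F G \<longleftrightarrow>
     (\<exists>X \<in> F - {{}, {1..n}}. G = {Y \<in> F - {{}, {1..n}}. hasse_conn (F - {{}, {1..n}}) X Y})"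

definition minimal_elems :: "'a set set \<Rightarrow> 'a set set" where
  "minimal_elems G = {X \<in> G. \<not> (\<exists>Y\<in>G. Y \<subset> X)}"

definition maximal_elems :: "'a set set \<Rightarrow> 'a set set" where
  "maximal_elems G = {X \<in> G. \<not> (\<exists>Y\<in>G. X \<subset> Y)}"

end

theory Submission
  imports Defs
begin

(* Every member of the component G is comparable with M. Otherwise let T be the union of the
   members of G strictly below M. Playing the minimal elements of G against the minimality of M
   shows that every member of G is comparable with T and that T is not in F. By saturation T lies
   in an induced N of F with T added; since T sits between two members of G, that copy is linked
   by comparabilities into G, so T would be comparable with all its other elements, which no
   element of an N is.
   If now S = M with i added is maximal in an induced N, comparability with M allows one of the two
   minimal elements of the copy to be exchanged for M. The other minimal element x satisfies
   x - M = {i}, so distinct i give distinct such x in F, none of them empty or equal to M. *)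

lemma hasse_conn_sym: "hasse_conn P x y \<Longrightarrow> hasse_conn P y x"
  unfolding hasse_conn_def
  by (induction rule: rtranclp_induct) (auto intro: converse_rtranclp_into_rtranclp)

lemma hasse_conn_if_subset:
  assumes "finite P" "x \<in> P" "y \<in> P" "x \<subseteq> y"
  shows "hasse_conn P x y"
  using assms(2,4)
proof (induction x rule: measure_induct_rule[where f = "\<lambda>u. card {w \<in> P. u \<subset> w \<and> w \<subseteq> y}"])
  case (less x)
  show ?case
  proof (cases "x = y")
    case True
    then show ?thesis unfolding hasse_conn_def by simp
  next
    case False
    let ?above = "\<lambda>u. {w \<in> P. u \<subset> w \<and> w \<subseteq> y}"
    have "y \<in> ?above x" using less.prems assms(3) False by auto
    then obtain z where z: "z \<in> ?above x" and z_min: "\<forall>w \<in> ?above x. w \<subseteq> z \<longrightarrow> z = w"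
      using finite_has_minimal2[of "?above x" y] assms(1) by auto
    have "\<not> (\<exists>Z \<in> P. x \<subset> Z \<and> Z \<subset> z)"
    proof
      assume "\<exists>Z \<in> P. x \<subset> Z \<and> Z \<subset> z"
      then obtain Z where "Z \<in> ?above x" "Z \<subset> z" using z by auto
      then show False using z_min by blast
    qed
    then have "covers P x z" unfolding covers_def using z less.prems by simp
    moreover have "card (?above z) < card (?above x)"
      by (rule psubset_card_mono) (use assms(1) z in auto)
    then have "hasse_conn P z y" using less.IH z by auto
    ultimately show ?thesis
      using converse_rtranclp_into_rtranclp[of "\<lambda>X Y. covers P X Y \<or> covers P Y X" x z y]
      unfolding hasse_conn_def by blast
  qed
qed

lemma component_closed_under_comparable:
  assumes "finite F" "is_component n F G" "y \<in> G" "z \<in> F" "z \<noteq> {}" "z \<noteq> {1..n}"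
    and "y \<subseteq> z \<or> z \<subseteq> y"
  shows "z \<in> G"
proof -
  let ?P = "F - {{}, {1..n}}"
  obtain X where G: "G = {Y \<in> ?P. hasse_conn ?P X Y}"
    using assms(2) unfolding is_component_def by blast
  have "hasse_conn ?P y z"
    using assms G hasse_conn_if_subset[of ?P] hasse_conn_sym by blast
  then show ?thesis
    using G assms(3-6) unfolding hasse_conn_def by (auto intro: rtranclp_trans)
qed

lemma component_subset: "is_component n F G \<Longrightarrow> G \<subseteq> F - {{}, {1..n}}"
  unfolding is_component_def by auto

lemma component_nonempty: "is_component n F G \<Longrightarrow> G \<noteq> {}"
  unfolding is_component_def hasse_conn_def by auto

lemma minimal_elems_below:
  assumes "finite G" "g \<in> G"
  shows "\<exists>B \<in> minimal_elems G. B \<subseteq> g"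
  using finite_has_minimal2[OF assms] unfolding minimal_elems_def by blast

lemma N_copy_subset: "is_N_copy Q a b c d \<Longrightarrow> {a, b, c, d} \<subseteq> Q"
  unfolding is_N_copy_def by simp

lemma N_copy_transfer: "is_N_copy Q a b c d \<Longrightarrow> {a, b, c, d} \<subseteq> Q' \<Longrightarrow> is_N_copy Q' a b c d"
  unfolding is_N_copy_def by simp

lemma is_N_copyI:
  assumes "{a, b, c, d} \<subseteq> Q" "a \<subseteq> c" "b \<subseteq> c" "b \<subseteq> d"
    and "\<not> a \<subseteq> b" "\<not> b \<subseteq> a" "\<not> a \<subseteq> d" "\<not> d \<subseteq> a" "\<not> c \<subseteq> d" "\<not> d \<subseteq> c"
  shows "is_N_copy Q a b c d"
proof -
  have "\<not> c \<subseteq> a" "\<not> c \<subseteq> b" "\<not> d \<subseteq> b" using assms(2-6,10) by blast+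
  then show ?thesis using assms unfolding is_N_copy_def by (intro conjI) auto
qed

lemma N_copy_proper:
  "is_N_copy Q a b c d \<Longrightarrow> Q \<subseteq> Pow U \<Longrightarrow> {a, b, c, d} \<subseteq> Q - {{}, U}"
  unfolding is_N_copy_def by auto

lemma N_copy_in_insert:
  assumes "is_N_copy (insert S Q) a b c d" "\<not> contains_N Q"
  shows "S \<in> {a, b, c, d}"
proof (rule ccontr)
  assume "S \<notin> {a, b, c, d}"
  then have "is_N_copy Q a b c d"
    using N_copy_subset[OF assms(1)] by (blast intro: N_copy_transfer[OF assms(1)])
  then show False using assms(2) unfolding contains_N_def by blast
qed

lemma N_copy_has_incomparable:
  assumes "is_N_copy Q a b c d" "x \<in> {a, b, c, d}"
  shows "\<exists>y \<in> {a, b, c, d}. \<not> y \<subseteq> x \<and> \<not> x \<subseteq> y"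
proof -
  have "\<not> a \<subseteq> b" "\<not> b \<subseteq> a" "\<not> c \<subseteq> d" "\<not> d \<subseteq> c"
    using assms(1) unfolding is_N_copy_def by simp_all
  then show ?thesis using assms(2) by blast
qed

lemma N_copy_connected:
  assumes "is_N_copy Q a b c d"
    and closed: "\<And>x y. x \<in> H \<Longrightarrow> y \<in> {a, b, c, d} \<Longrightarrow> x \<subseteq> y \<or> y \<subseteq> x \<Longrightarrow> y \<in> H"
    and "x \<in> {a, b, c, d}" "x \<in> H"
  shows "{a, b, c, d} \<subseteq> H"
proof -
  have "a \<subseteq> c" "b \<subseteq> c" "b \<subseteq> d" using assms(1) unfolding is_N_copy_def by simp_all
  then have "a \<in> H \<longleftrightarrow> c \<in> H" "c \<in> H \<longleftrightarrow> b \<in> H" "b \<in> H \<longleftrightarrow> d \<in> H"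
    using closed by blast+
  then show ?thesis using assms(3,4) by blast
qed

lemma N_copy_replace_a:
  assumes "{M, b, c, d} \<subseteq> Q" "b \<subseteq> c" "b \<subseteq> d" "\<not> c \<subseteq> b" "\<not> c \<subseteq> d" "\<not> d \<subseteq> c"
    and "c = insert i M" "i \<notin> M" "i \<in> b"
  shows "is_N_copy Q M b c d"
proof (rule is_N_copyI)
  show "\<not> M \<subseteq> d" using assms(3,5,7,9) by blast
qed (use assms in blast)+

lemma N_copy_replace_b:
  assumes "is_N_copy Q a b c d" "M \<in> Q" "M \<subseteq> d" "c = insert i M"
  shows "is_N_copy Q a M c d"
proof -
  have "{a, c, d} \<subseteq> Q" "a \<subseteq> c" "\<not> a \<subseteq> d" "\<not> d \<subseteq> a" "\<not> c \<subseteq> d" "\<not> d \<subseteq> c" "\<not> c \<subseteq> a"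
    using assms(1) unfolding is_N_copy_def by simp_all
  then show ?thesis
    using assms(2-4) by (intro is_N_copyI) blast+
qed

lemma N_copy_other_lower_diff:
  assumes "is_N_copy Q M x (insert i M) y \<or> is_N_copy Q x M (insert i M) y"
  shows "x \<in> Q - {insert i M}" "x - M = {i}"
  using assms unfolding is_N_copy_def by blast+

lemma N_saturated_contains_N_insert:
  "N_saturated n F \<Longrightarrow> S \<subseteq> {1..n} \<Longrightarrow> S \<notin> F \<Longrightarrow> contains_N (insert S F)"
  unfolding N_saturated_def by simp

lemma N_saturated_empty_mem:
  assumes "N_saturated n F"
  shows "{} \<in> F"
proof (rule ccontr)
  assume "{} \<notin> F"
  then obtain a b c d where copy: "is_N_copy (insert {} F) a b c d"
    using N_saturated_contains_N_insert[OF assms] unfolding contains_N_def by blast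
  have "\<not> contains_N F" using assms by (simp add: N_saturated_def)
  then have "{} \<in> {a, b, c, d}" by (rule N_copy_in_insert[OF copy])
  moreover have "{a, b, c, d} \<subseteq> insert {} F - {{}, UNIV}"
    by (rule N_copy_proper[OF copy]) simp
  ultimately show False by blast
qed

lemma card_add_two_le_if_singleton_diffs:
  assumes "finite F" "{} \<in> F" "M \<in> F" "M \<noteq> {}" "\<forall>i \<in> I. \<exists>x \<in> F. x - M = {i}"
  shows "card I + 2 \<le> card F"
proof -
  have "I \<subseteq> (\<lambda>x. the_elem (x - M)) ` (F - {{}, M})"
  proof
    fix i assume "i \<in> I"
    then obtain x where "x \<in> F" "x - M = {i}" using assms(5) by blast
    then show "i \<in> (\<lambda>x. the_elem (x - M)) ` (F - {{}, M})"
      by (intro rev_image_eqI[of x]) auto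
  qed
  then have "card I \<le> card ((\<lambda>x. the_elem (x - M)) ` (F - {{}, M}))"
    by (rule card_mono[rotated]) (use assms(1) in simp)
  also have "\<dots> \<le> card (F - {{}, M})"
    by (rule card_image_le) (use assms(1) in simp)
  also have "\<dots> = card F - 2"
    using assms(1-4) by (simp add: card_Diff_subset)
  finally show ?thesis
    using card_mono[OF assms(1), of "{{}, M}"] assms(2-4) by simp
qed

locale minimal_middle_set =
  fixes n :: nat and F G :: "nat set set" and M :: "nat set"
  assumes saturated: "N_saturated n F"
    and component: "is_component n F G"
    and M_mem: "M \<in> F"
    and minimal_elems_le_M: "\<Union>(minimal_elems G) \<subseteq> M"
    and M_le_maximal_elems: "M \<subseteq> \<Inter>(maximal_elems G)"
    and M_minimal: "\<forall>M' \<in> F. \<Union>(minimal_elems G) \<subseteq> M' \<and> M' \<subseteq> \<Inter>(maximal_elems G) \<longrightarrow> \<not> M' \<subset> M"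
begin

lemma F_subset: "F \<subseteq> Pow {1..n}"
  using saturated by (simp add: N_saturated_def)

lemma finite_F: "finite F"
  using F_subset by (rule finite_subset) simp

lemma not_contains_N: "\<not> contains_N F"
  using saturated by (simp add: N_saturated_def)

lemma finite_G: "finite G"
  using component_subset[OF component] finite_F by (rule finite_subset[OF _ finite_Diff])

lemmas G_subset = component_subset[OF component]

lemma G_closed:
  assumes "y \<in> G" "z \<in> F - {{}, {1..n}}" "y \<subseteq> z \<or> z \<subseteq> y"
  shows "z \<in> G"
  using component_closed_under_comparable[OF finite_F component assms(1)] assms(2,3) by blast

lemma minimal_elem:
  assumes "B \<in> minimal_elems G"
  shows "B \<in> G" "B \<subseteq> M" "\<And>Y. Y \<in> G \<Longrightarrow> Y \<subseteq> B \<Longrightarrow> Y = B"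
  using assms minimal_elems_le_M unfolding minimal_elems_def by auto

lemma minimal_elems_nonempty: "minimal_elems G \<noteq> {}"
  using component_nonempty[OF component] minimal_elems_below[OF finite_G] by blast

lemma M_nonempty: "M \<noteq> {}"
  using minimal_elems_nonempty minimal_elem G_subset by blast

lemma M_mem_G:
  assumes "M \<noteq> {1..n}"
  shows "M \<in> G"
proof -
  obtain B where "B \<in> minimal_elems G" using minimal_elems_nonempty by blast
  then show ?thesis
    using minimal_elem G_closed[of B M] M_mem M_nonempty assms by blast
qed

lemma eq_M_if_between:
  "w \<in> F \<Longrightarrow> \<Union>(minimal_elems G) \<subseteq> w \<Longrightarrow> w \<subseteq> M \<Longrightarrow> w = M"
  using M_minimal M_le_maximal_elems by blast

lemma below_M_le_incomparable:
  assumes w: "w \<in> G" "w \<subset> M" and g: "g \<in> G" "\<not> g \<subseteq> M" "\<not> M \<subseteq> g"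
  shows "w \<subseteq> g"
proof (rule ccontr)
  assume wg: "\<not> w \<subseteq> g"
  have F: "w \<in> F" "g \<in> F" "\<And>B. B \<in> minimal_elems G \<Longrightarrow> B \<in> F"
    using w g minimal_elem G_subset by blast+
  have copy_via: "is_N_copy F w B M g"
    if B: "B \<in> minimal_elems G" "B \<subseteq> g" "\<not> B \<subseteq> w" for B
  proof (rule is_N_copyI)
    show "\<not> w \<subseteq> B" using minimal_elem(3)[OF B(1) w(1)] B(3) by blast
    show "\<not> g \<subseteq> w" using w(2) g(2) by blast
  qed (use w(2) g(2,3) wg B F(1,2) F(3)[OF B(1)] M_mem minimal_elem(2)[OF B(1)] in auto)
  obtain B0 where B0: "B0 \<in> minimal_elems G" "\<not> B0 \<subseteq> w"
    using eq_M_if_between F(1) w(2) by blast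
  obtain B1 where B1: "B1 \<in> minimal_elems G" "B1 \<subseteq> g"
    using minimal_elems_below[OF finite_G g(1)] by blast
  consider "B0 \<subseteq> g" | "\<not> B1 \<subseteq> w" | "\<not> B0 \<subseteq> g" "B1 \<subseteq> w" by blast
  then have "contains_N F"
  proof cases
    case 1
    then show ?thesis using copy_via B0 unfolding contains_N_def by blast
  next
    case 2
    then show ?thesis using copy_via B1 unfolding contains_N_def by blast
  next
    case 3
    have "is_N_copy F B0 B1 M g"
    proof (rule is_N_copyI)
      show "\<not> B1 \<subseteq> B0" using minimal_elem(3)[OF B0(1) minimal_elem(1)[OF B1(1)]] B0(2) 3(2) by blast
    qed (use 3 w(2) g(2,3) B0(2) B1(2) F(3)[OF B0(1)] F(3)[OF B1(1)] M_mem F(2)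
           minimal_elem(2)[OF B0(1)] minimal_elem(2)[OF B1(1)] in auto)
    then show ?thesis unfolding contains_N_def by blast
  qed
  then show False using not_contains_N by blast
qed

definition Union_below_M :: "nat set" where
  "Union_below_M = \<Union>{w \<in> G. w \<subset> M}"

lemma Union_below_M_le_M: "Union_below_M \<subseteq> M"
  unfolding Union_below_M_def by blast

lemma comparable_Union_below_M:
  assumes "g \<in> G"
  shows "g \<subseteq> Union_below_M \<or> Union_below_M \<subseteq> g"
proof -
  consider "g \<subset> M" | "M \<subseteq> g" | "\<not> g \<subseteq> M" "\<not> M \<subseteq> g" by blast
  then show ?thesis
  proof cases
    case 1
    then show ?thesis using assms unfolding Union_below_M_def by blast
  next
    case 2
    then show ?thesis using Union_below_M_le_M by blast
  next
    case 3
    then show ?thesis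
      using below_M_le_incomparable[OF _ _ assms] unfolding Union_below_M_def by blast
  qed
qed

lemma minimal_elems_le_Union_below_M:
  assumes "w \<in> G" "w \<subset> M"
  shows "\<Union>(minimal_elems G) \<subseteq> Union_below_M"
proof -
  have "B \<subset> M" if "B \<in> minimal_elems G" for B
    using minimal_elem[OF that] assms by blast
  then show ?thesis
    using minimal_elem(1) unfolding Union_below_M_def by blast
qed

lemma below_M_if_incomparable:
  assumes "z \<in> G" "\<not> z \<subseteq> M" "\<not> M \<subseteq> z"
  obtains w where "w \<in> G" "w \<subset> M"
proof -
  obtain B where "B \<in> minimal_elems G" "B \<subseteq> z"
    using minimal_elems_below[OF finite_G assms(1)] by blast
  then show ?thesis using that minimal_elem assms(3) by blast
qed

lemma mem_G_if_comparable_Union_below_M: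
  assumes "M \<noteq> {1..n}" "w \<in> G" "w \<subset> M"
    and "y \<in> F - {{}, {1..n}}" "y \<subseteq> Union_below_M \<or> Union_below_M \<subseteq> y"
  shows "y \<in> G"
proof -
  have "y \<subseteq> M \<or> w \<subseteq> y"
    using assms(2,3,5) Union_below_M_le_M unfolding Union_below_M_def by blast
  then show ?thesis
    using G_closed[OF M_mem_G[OF assms(1)] assms(4)] G_closed[OF assms(2) assms(4)] by blast
qed

lemma comparable_M:
  assumes "M \<noteq> {1..n}" "z \<in> G"
  shows "z \<subseteq> M \<or> M \<subseteq> z"
proof (rule ccontr)
  assume z: "\<not> (z \<subseteq> M \<or> M \<subseteq> z)"
  let ?T = Union_below_M
  obtain w where w: "w \<in> G" "w \<subset> M"
    using below_M_if_incomparable assms(2) z by blast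
  have "?T \<notin> F"
  proof
    assume "?T \<in> F"
    then have "?T = M"
      using eq_M_if_between minimal_elems_le_Union_below_M[OF w] Union_below_M_le_M by blast
    then show False using comparable_Union_below_M[OF assms(2)] z by simp
  qed
  moreover have T_subset: "?T \<subseteq> {1..n}" using Union_below_M_le_M M_mem F_subset by blast
  ultimately have "contains_N (insert ?T F)"
    using N_saturated_contains_N_insert[OF saturated] by blast
  then obtain a b c d where copy: "is_N_copy (insert ?T F) a b c d"
    unfolding contains_N_def by blast
  have T_in: "?T \<in> {a, b, c, d}" using N_copy_in_insert[OF copy not_contains_N] .
  have proper: "{a, b, c, d} \<subseteq> insert ?T F - {{}, {1..n}}"
    using N_copy_proper[OF copy] F_subset T_subset by blast
  have "{a, b, c, d} \<subseteq> insert ?T G"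
  proof (rule N_copy_connected[OF copy _ T_in])
    fix x y assume x: "x \<in> insert ?T G" and y: "y \<in> {a, b, c, d}" and xy: "x \<subseteq> y \<or> y \<subseteq> x"
    show "y \<in> insert ?T G"
    proof (cases "y = ?T")
      case False
      then have y_mem: "y \<in> F - {{}, {1..n}}" using proper y by blast
      from x show ?thesis
      proof
        assume "x = ?T"
        then show ?thesis using mem_G_if_comparable_Union_below_M[OF assms(1) w y_mem] xy by blast
      next
        assume "x \<in> G"
        then show ?thesis using G_closed y_mem xy by blast
      qed
    qed simp
  qed simp
  then have "\<forall>y \<in> {a, b, c, d}. y \<subseteq> ?T \<or> ?T \<subseteq> y"
    using comparable_Union_below_M by blast
  then show False using N_copy_has_incomparable[OF copy T_in] by blast
qed

lemma N_copy_mem_G_if_b_le_M: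
  assumes i: "i \<in> {1..n}" "i \<notin> M"
    and copy: "is_N_copy (insert (insert i M) F) a b c d"
    and "insert i M \<in> {c, d}" "b \<subseteq> M"
  shows "{b, c, d} - {insert i M} \<subseteq> G"
proof -
  have "insert (insert i M) F \<subseteq> Pow {1..n}" using F_subset M_mem i by blast
  then have proper: "{b, c, d} - {insert i M} \<subseteq> F - {{}, {1..n}}"
    using N_copy_proper[OF copy] by blast
  have "b \<in> F - {{}, {1..n}}" using proper \<open>b \<subseteq> M\<close> i(2) by blast
  moreover have "M \<in> G" using M_mem_G i by blast
  ultimately have "b \<in> G" using G_closed \<open>b \<subseteq> M\<close> by blast
  have "b \<subseteq> c" "b \<subseteq> d" using copy unfolding is_N_copy_def by simp_all
  show ?thesis
  proof
    fix y assume "y \<in> {b, c, d} - {insert i M}"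
    then show "y \<in> G"
      using G_closed[OF \<open>b \<in> G\<close>] proper \<open>b \<subseteq> c\<close> \<open>b \<subseteq> d\<close> by blast
  qed
qed

lemma N_copy_point_mem_b_if_d:
  assumes i: "i \<in> {1..n}" "i \<notin> M"
    and copy: "is_N_copy (insert (insert i M) F) a b c (insert i M)"
  shows "i \<in> b"
proof (rule ccontr)
  assume "i \<notin> b"
  have rel: "a \<subseteq> c" "b \<subseteq> insert i M" "\<not> b \<subseteq> a" "\<not> a \<subseteq> insert i M" "c \<noteq> insert i M"
    using copy unfolding is_N_copy_def by simp_all
  have "b \<subseteq> M" using rel(2) \<open>i \<notin> b\<close> by blast
  then have "c \<in> G" using N_copy_mem_G_if_b_le_M[OF i copy] rel(5) by blast
  have "insert (insert i M) F \<subseteq> Pow {1..n}" using F_subset M_mem i by blast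
  then have "a \<in> F - {{}, {1..n}}" using N_copy_proper[OF copy] rel(4) by blast
  then have "a \<in> G" using G_closed[OF \<open>c \<in> G\<close>] rel(1) by blast
  then have "a \<subseteq> M \<or> M \<subseteq> a" using comparable_M i by blast
  then show False using rel(3,4) \<open>b \<subseteq> M\<close> by blast
qed

lemma N_copy_M_le_d_if_c:
  assumes i: "i \<in> {1..n}" "i \<notin> M"
    and copy: "is_N_copy (insert (insert i M) F) a b (insert i M) d" and "i \<notin> b"
  shows "M \<subseteq> d"
proof -
  have rel: "b \<subseteq> insert i M" "\<not> d \<subseteq> insert i M" "insert i M \<noteq> d"
    using copy unfolding is_N_copy_def by simp_all
  have "b \<subseteq> M" using rel(1) \<open>i \<notin> b\<close> by blast
  then have "d \<in> G" using N_copy_mem_G_if_b_le_M[OF i copy] rel(3) by blast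
  then show ?thesis using comparable_M i rel(2) by blast
qed

lemma N_copy_through_M:
  assumes i: "i \<in> {1..n}" "i \<notin> M"
    and "max_of_N_copy (insert (insert i M) F) (insert i M)"
  shows "\<exists>x y. is_N_copy (insert (insert i M) F) M x (insert i M) y \<or>
               is_N_copy (insert (insert i M) F) x M (insert i M) y"
proof -
  let ?S = "insert i M" and ?Q = "insert (insert i M) F"
  obtain a b c d where copy: "is_N_copy ?Q a b c d" and S_max: "?S = c \<or> ?S = d"
    using assms(3) unfolding max_of_N_copy_def by blast
  have rel: "{b, c, d} \<subseteq> ?Q" "b \<subseteq> c" "b \<subseteq> d" "\<not> c \<subseteq> b" "\<not> d \<subseteq> b" "\<not> c \<subseteq> d" "\<not> d \<subseteq> c"
    using copy unfolding is_N_copy_def by simp_all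
  have "M \<in> ?Q" using M_mem by simp
  show ?thesis
  proof (cases "i \<in> b")
    case True
    from S_max show ?thesis
    proof
      assume c: "?S = c"
      have "{M, b, c, d} \<subseteq> ?Q" using rel(1) \<open>M \<in> ?Q\<close> by blast
      from N_copy_replace_a[OF this rel(2,3,4,6,7) c[symmetric] i(2) True]
      show ?thesis using c by blast
    next
      assume d: "?S = d"
      have "{M, b, d, c} \<subseteq> ?Q" using rel(1) \<open>M \<in> ?Q\<close> by blast
      from N_copy_replace_a[OF this rel(3,2,5,7,6) d[symmetric] i(2) True]
      show ?thesis using d by blast
    qed
  next
    case False
    have "?S \<noteq> d"
    proof
      assume "?S = d"
      then have "is_N_copy ?Q a b c ?S" using copy by simp
      then show False using N_copy_point_mem_b_if_d[OF i] False by blast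
    qed
    then have copy_c: "is_N_copy ?Q a b ?S d" using S_max copy by simp
    then have "M \<subseteq> d" using N_copy_M_le_d_if_c[OF i _ False] by blast
    then have "is_N_copy ?Q a M ?S d"
      using N_copy_replace_b[OF copy_c \<open>M \<in> ?Q\<close>] by simp
    then show ?thesis by blast
  qed
qed

end

theorem lemma3p3:
  fixes n :: nat and F G :: "nat set set" and M :: "nat set"
  assumes "n \<ge> 1"
    and "N_saturated n F"
    and "is_component n F G"
    and "M \<in> F"
    and "\<Union>(minimal_elems G) \<subseteq> M" and "M \<subseteq> \<Inter>(maximal_elems G)"
    and "\<forall>M'\<in>F. \<Union>(minimal_elems G) \<subseteq> M' \<and> M' \<subseteq> \<Inter>(maximal_elems G) \<longrightarrow> \<not> M' \<subset> M"
  shows "(\<forall>i \<in> {1..n}. i \<notin> M \<longrightarrow> insert i M \<notin> F \<longrightarrow>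
            max_of_N_copy (insert (insert i M) F) (insert i M) \<longrightarrow>
            (\<exists>x y. is_N_copy (insert (insert i M) F) M x (insert i M) y \<or>
                   is_N_copy (insert (insert i M) F) x M (insert i M) y))
       \<and> int (card {i \<in> {1..n} - M. insert i M \<notin> F \<and>
                     max_of_N_copy (insert (insert i M) F) (insert i M)})
           \<le> int (card F) - 2"
proof -
  interpret minimal_middle_set n F G M
    using assms(2-7) by unfold_locales
  let ?I = "{i \<in> {1..n} - M. insert i M \<notin> F \<and> max_of_N_copy (insert (insert i M) F) (insert i M)}"
  have "\<forall>i \<in> ?I. \<exists>x \<in> F. x - M = {i}"
  proof
    fix i assume "i \<in> ?I"
    then have "i \<in> {1..n}" "i \<notin> M" "max_of_N_copy (insert (insert i M) F) (insert i M)"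
      by simp_all
    then obtain x y where "is_N_copy (insert (insert i M) F) M x (insert i M) y \<or>
                           is_N_copy (insert (insert i M) F) x M (insert i M) y"
      using N_copy_through_M by blast
    then have "x \<in> insert (insert i M) F - {insert i M}" "x - M = {i}"
      by (rule N_copy_other_lower_diff)+
    then show "\<exists>x \<in> F. x - M = {i}" by blast
  qed
  then have "card ?I + 2 \<le> card F"
    by (rule card_add_two_le_if_singleton_diffs[OF finite_F N_saturated_empty_mem[OF saturated]
          M_mem M_nonempty])
  then have "int (card ?I) \<le> int (card F) - 2" by linarith
  with N_copy_through_M show ?thesis by blast
qed

end
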